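(* Let $0\le a\le b$ and let $Q$ be a path linkage with four edges $e_1,e_2,e_3,e_4$ (in this order along the path) of lengths $l(e_1)=\frac{a+b}{2}$ and $l(e_2)=l(e_3)=l(e_4)=\frac{b-a}{6}$. Then $[Q]=[a,b]$ and $\nabla(Q)=[a,b]$.
   Context: A path linkage is a linkage $P=(G,l)$ where $G$ is a path graph with vertices $1,\dots,k+1$ and edges $\{i,i+1\}$; its terminal vertices are $s=1$, $t=k+1$. $C(P)=\{p:V\to\mathbb R^2:|p(u)-p(v)|=l(\{u,v\})\text{ for every edge}\}$, $M(P)$ is the quotient of $C(P)$ by the group of orientation preserving isometries of $\mathbb R^2$, $\theta:M(P)\to\mathbb R$, $\theta(p)=|p(s)-p(t)|$, $[P]=\theta(M(P))$, and $\nabla(P)=\{x\in[P]:\theta^{-1}(x)\text{ is connected}\}$. *)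

theory Defs
  imports "HOL-Analysis.Analysis"
begin

text \<open>Path linkage with k edges: vertices 1..k+1, edge i = {i, i+1} (1 <= i <= k) of length l i.
  The plane R^2 is identified with the complex numbers.\<close>

definition cspace_top :: "nat \<Rightarrow> (nat \<Rightarrow> complex) topology" where
  "cspace_top k = product_topology (\<lambda>_. euclidean) {1..Suc k}"

definition conf :: "nat \<Rightarrow> (nat \<Rightarrow> real) \<Rightarrow> (nat \<Rightarrow> complex) set" where
  "conf k l = {p \<in> topspace (cspace_top k). \<forall>i\<in>{1..k}. cmod (p i - p (Suc i)) = l i}"

definition or_isom :: "(complex \<Rightarrow> complex) set" where
  "or_isom = {g. \<exists>u c. cmod u = 1 \<and> (\<forall>z. g z = u * z + c)}"

definition congr_rel :: "nat \<Rightarrow> (nat \<Rightarrow> real) \<Rightarrow> ((nat \<Rightarrow> complex) \<times> (nat \<Rightarrow> complex)) set" where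
  "congr_rel k l = {(p, q). p \<in> conf k l \<and> q \<in> conf k l \<and>
      (\<exists>g\<in>or_isom. \<forall>i\<in>{1..Suc k}. q i = g (p i))}"

definition moduli :: "nat \<Rightarrow> (nat \<Rightarrow> real) \<Rightarrow> (nat \<Rightarrow> complex) set set" where
  "moduli k l = conf k l // congr_rel k l"

definition moduli_top :: "nat \<Rightarrow> (nat \<Rightarrow> real) \<Rightarrow> (nat \<Rightarrow> complex) set topology" where
  "moduli_top k l = topology (\<lambda>U. U \<subseteq> moduli k l \<and>
      openin (subtopology (cspace_top k) (conf k l)) (\<Union>U))"

definition theta :: "nat \<Rightarrow> (nat \<Rightarrow> complex) set \<Rightarrow> real" where
  "theta k X = cmod ((SOME p. p \<in> X) 1 - (SOME p. p \<in> X) (Suc k))"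

definition reach :: "nat \<Rightarrow> (nat \<Rightarrow> real) \<Rightarrow> real set" where
  "reach k l = theta k ` moduli k l"

definition nabla :: "nat \<Rightarrow> (nat \<Rightarrow> real) \<Rightarrow> real set" where
  "nabla k l = {x \<in> reach k l. connectedin (moduli_top k l) {X \<in> moduli k l. theta k X = x}}"

end

theory Submission
  imports Defs
begin

text \<open>
  For 0 \<le> a \<le> b put L = (a + b)/2 and s = (b - a)/6, so the linkage Q has edge lengths L, s, s, s,
  with L \<ge> 3s and [a, b] = [L - 3s, L + 3s].  The triangle inequality along the path shows that
  [Q] \<subseteq> [a, b].  For the converse and for connectedness of the fibres we use a reduction that
  holds for every path linkage: if some connected set of configurations with terminal distance x
  meets every congruence class in the fibre over x, that fibre is a continuous image of it under
  the quotient map, hence connected (and nonempty).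

  For Q such a set is obtained by normalising p(1) = 0 and p(4) to the positive real axis.  Such a
  configuration is determined by the two diagonals r = |p(3) - p(1)| and q = |p(4) - p(1)|, which
  range over a convex polygon, and by the orientations (\<plusminus>1) of the triangles (p1,p2,p3),
  (p1,p3,p4), (p1,p4,p5), whose apexes are constructed explicitly.  Each of the eight orientation
  pieces is connected, and flat triangles glue all pieces together.  The degenerate case a = b = 0
  (all edges of length 0) is treated separately.
\<close>

lemma congr_rel_iff:
  "(p, q) \<in> congr_rel k l \<longleftrightarrow> p \<in> conf k l \<and> q \<in> conf k l \<and>
     (\<exists>u c. cmod u = 1 \<and> (\<forall>i\<in>{1..Suc k}. q i = u * p i + c))"
proof
  assume "(p, q) \<in> congr_rel k l"
  then show "p \<in> conf k l \<and> q \<in> conf k l \<and> (\<exists>u c. cmod u = 1 \<and> (\<forall>i\<in>{1..Suc k}. q i = u * p i + c))"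
    unfolding congr_rel_def or_isom_def by fastforce
next
  assume "p \<in> conf k l \<and> q \<in> conf k l \<and> (\<exists>u c. cmod u = 1 \<and> (\<forall>i\<in>{1..Suc k}. q i = u * p i + c))"
  then obtain u c where "p \<in> conf k l" "q \<in> conf k l" "cmod u = 1" "\<forall>i\<in>{1..Suc k}. q i = u * p i + c"
    by blast
  moreover have "(\<lambda>z. u * z + c) \<in> or_isom"
    unfolding or_isom_def using \<open>cmod u = 1\<close> by auto
  ultimately show "(p, q) \<in> congr_rel k l"
    unfolding congr_rel_def by auto
qed

lemma congrI:
  assumes "p \<in> conf k l" "q \<in> conf k l" "cmod u = 1" "\<And>i. i \<in> {1..Suc k} \<Longrightarrow> q i = u * p i + c"
  shows "(p, q) \<in> congr_rel k l"
  using assms unfolding congr_rel_iff by blast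

lemma equiv_congr: "equiv (conf k l) (congr_rel k l)"
proof (rule equivI)
  show "congr_rel k l \<subseteq> conf k l \<times> conf k l"
    unfolding congr_rel_def by auto
  show "refl_on (conf k l) (congr_rel k l)"
    unfolding refl_on_def by (auto intro: congrI[where u = 1 and c = 0])
  show "sym (congr_rel k l)"
  proof (rule symI)
    fix p q assume "(p, q) \<in> congr_rel k l"
    then obtain u c where pq: "p \<in> conf k l" "q \<in> conf k l" "cmod u = 1"
        "\<And>i. i \<in> {1..Suc k} \<Longrightarrow> q i = u * p i + c"
      unfolding congr_rel_iff by blast
    have "u \<noteq> 0" using pq(3) by auto
    then show "(q, p) \<in> congr_rel k l"
      using pq by (intro congrI[where u = "1 / u" and c = "- c / u"]) (auto simp: norm_divide field_simps)
  qed
  show "trans (congr_rel k l)"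
  proof (rule transI)
    fix p q r assume "(p, q) \<in> congr_rel k l" "(q, r) \<in> congr_rel k l"
    then obtain u c v d where "p \<in> conf k l" "r \<in> conf k l" "cmod u = 1" "cmod v = 1"
        "\<And>i. i \<in> {1..Suc k} \<Longrightarrow> q i = u * p i + c"
        "\<And>i. i \<in> {1..Suc k} \<Longrightarrow> r i = v * q i + d"
      unfolding congr_rel_iff by metis
    then show "(p, r) \<in> congr_rel k l"
      by (intro congrI[where u = "v * u" and c = "v * c + d"]) (auto simp: norm_mult algebra_simps)
  qed
qed

lemma topspace_cspace_top: "topspace (cspace_top k) = extensional {1..Suc k}"
  unfolding cspace_top_def by (auto simp: PiE_def)

lemma conf_subset_topspace: "conf k l \<subseteq> topspace (cspace_top k)"
  unfolding conf_def by auto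

text \<open>Distinct congruence classes are disjoint, so taking unions commutes with intersecting
  sets of classes.\<close>
lemma Union_Int_classes:
  assumes "S \<subseteq> moduli k l" "T \<subseteq> moduli k l"
  shows "\<Union>(S \<inter> T) = \<Union>S \<inter> \<Union>T"
proof
  show "\<Union>S \<inter> \<Union>T \<subseteq> \<Union>(S \<inter> T)"
  proof
    fix p assume "p \<in> \<Union>S \<inter> \<Union>T"
    then obtain X Y where "X \<in> S" "Y \<in> T" "p \<in> X" "p \<in> Y" by auto
    moreover have "X = Y \<or> X \<inter> Y = {}"
      using quotient_disj[OF equiv_congr] assms \<open>X \<in> S\<close> \<open>Y \<in> T\<close> unfolding moduli_def by blast
    ultimately show "p \<in> \<Union>(S \<inter> T)" by auto
  qed
qed auto

text \<open>The defining predicate of the quotient topology is a topology, hence it describes its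
  open sets.\<close>
lemma openin_moduli_top:
  "openin (moduli_top k l) U \<longleftrightarrow>
     U \<subseteq> moduli k l \<and> openin (subtopology (cspace_top k) (conf k l)) (\<Union>U)"
proof -
  have "istopology (\<lambda>U. U \<subseteq> moduli k l \<and> openin (subtopology (cspace_top k) (conf k l)) (\<Union>U))"
    unfolding istopology_def
  proof (rule conjI; intro allI impI)
    fix S T assume "S \<subseteq> moduli k l \<and> openin (subtopology (cspace_top k) (conf k l)) (\<Union>S)"
      "T \<subseteq> moduli k l \<and> openin (subtopology (cspace_top k) (conf k l)) (\<Union>T)"
    then show "S \<inter> T \<subseteq> moduli k l \<and> openin (subtopology (cspace_top k) (conf k l)) (\<Union>(S \<inter> T))"
      using Union_Int_classes[of S k l T] by auto
  next
    fix K assume "\<forall>U\<in>K. U \<subseteq> moduli k l \<and> openin (subtopology (cspace_top k) (conf k l)) (\<Union>U)"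
    moreover have "\<Union>(\<Union>K) = \<Union>(Union ` K)" by auto
    ultimately show "\<Union>K \<subseteq> moduli k l \<and> openin (subtopology (cspace_top k) (conf k l)) (\<Union>(\<Union>K))"
      by auto
  qed
  then show ?thesis
    unfolding moduli_top_def by simp
qed

definition cls :: "nat \<Rightarrow> (nat \<Rightarrow> real) \<Rightarrow> (nat \<Rightarrow> complex) \<Rightarrow> (nat \<Rightarrow> complex) set" where
  "cls k l p = congr_rel k l `` {p}"

lemma moduli_eq_image_cls: "moduli k l = cls k l ` conf k l"
  unfolding moduli_def quotient_def cls_def by auto

lemma cls_self: "p \<in> conf k l \<Longrightarrow> p \<in> cls k l p"
  unfolding cls_def using equiv_class_self[OF equiv_congr] by auto

lemma cls_eq: "(p, q) \<in> congr_rel k l \<Longrightarrow> cls k l p = cls k l q"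
  unfolding cls_def using equiv_class_eq[OF equiv_congr] by auto

lemma topspace_moduli_top: "topspace (moduli_top k l) = moduli k l"
proof -
  have "\<Union>(moduli k l) = conf k l"
    unfolding moduli_def by (rule Union_quotient[OF equiv_congr])
  then have "openin (moduli_top k l) (moduli k l)"
    unfolding openin_moduli_top using conf_subset_topspace
    by (simp add: openin_subtopology_refl inf.absorb2)
  then have "moduli k l \<subseteq> topspace (moduli_top k l)"
    by (rule openin_subset)
  moreover have "topspace (moduli_top k l) \<subseteq> moduli k l"
    using openin_moduli_top[of k l "topspace (moduli_top k l)"] by auto
  ultimately show ?thesis by auto
qed

lemma mem_moduli_class:
  assumes "X \<in> moduli k l" "p \<in> X"
  shows "p \<in> conf k l" "X = cls k l p"
proof -
  obtain q where q: "q \<in> conf k l" "X = cls k l q"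
    using assms(1) unfolding moduli_eq_image_cls by blast
  then have "(q, p) \<in> congr_rel k l"
    using assms(2) unfolding cls_def by auto
  then show "p \<in> conf k l" "X = cls k l p"
    using q cls_eq unfolding congr_rel_def by auto
qed

text \<open>The quotient map is continuous: the preimage of an open set of classes is its
  union.\<close>
lemma continuous_map_cls:
  "continuous_map (subtopology (cspace_top k) (conf k l)) (moduli_top k l) (cls k l)"
  unfolding continuous_map_def
proof (intro conjI allI impI)
  have top: "topspace (subtopology (cspace_top k) (conf k l)) = conf k l"
    using conf_subset_topspace by auto
  show "cls k l \<in> topspace (subtopology (cspace_top k) (conf k l)) \<rightarrow> topspace (moduli_top k l)"
    unfolding top topspace_moduli_top moduli_eq_image_cls by auto
  fix U assume U: "openin (moduli_top k l) U"
  then have "U \<subseteq> moduli k l"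
    unfolding openin_moduli_top by auto
  then have "{p \<in> conf k l. cls k l p \<in> U} = \<Union>U"
    using mem_moduli_class cls_self by blast
  then show "openin (subtopology (cspace_top k) (conf k l))
      {p \<in> topspace (subtopology (cspace_top k) (conf k l)). cls k l p \<in> U}"
    using U unfolding openin_moduli_top top by simp
qed

text \<open>The distance between the terminal vertices is invariant under isometries, so \<theta>
  may be computed on any representative.\<close>
lemma theta_cls: "p \<in> conf k l \<Longrightarrow> theta k (cls k l p) = cmod (p 1 - p (Suc k))"
proof -
  assume p: "p \<in> conf k l"
  define q where "q = (SOME q. q \<in> cls k l p)"
  have "q \<in> cls k l p"
    unfolding q_def using cls_self[OF p] by (metis someI)
  then have "(p, q) \<in> congr_rel k l"
    unfolding cls_def by simp
  then obtain u c where "cmod u = 1" "\<forall>i\<in>{1..Suc k}. q i = u * p i + c"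
    unfolding congr_rel_iff by blast
  then have "cmod (q 1 - q (Suc k)) = cmod (u * (p 1 - p (Suc k)))"
    by (simp add: algebra_simps)
  also have "\<dots> = cmod (p 1 - p (Suc k))"
    using \<open>cmod u = 1\<close> by (simp add: norm_mult)
  finally show ?thesis
    unfolding theta_def q_def .
qed

lemma reach_eq: "reach k l = (\<lambda>p. cmod (p 1 - p (Suc k))) ` conf k l"
  unfolding reach_def moduli_eq_image_cls image_image
  by (rule image_cong) (simp_all add: theta_cls)

text \<open>Main reduction: if a connected set C of configurations with terminal distance x meets
  the class of every such configuration, then the fibre over x is the continuous image of C, hence
  connected, and x lies in \<nabla>(P).\<close>
lemma mem_nabla_if_transversal:
  assumes "C \<noteq> {}" "connectedin (subtopology (cspace_top k) (conf k l)) C"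
    and "C \<subseteq> {p \<in> conf k l. cmod (p 1 - p (Suc k)) = x}"
    and "\<And>p. p \<in> conf k l \<Longrightarrow> cmod (p 1 - p (Suc k)) = x \<Longrightarrow> \<exists>q\<in>C. (p, q) \<in> congr_rel k l"
  shows "x \<in> nabla k l"
proof -
  have fiber: "{X \<in> moduli k l. theta k X = x} = cls k l ` C"
  proof
    show "{X \<in> moduli k l. theta k X = x} \<subseteq> cls k l ` C"
    proof
      fix X assume X: "X \<in> {X \<in> moduli k l. theta k X = x}"
      then obtain p where p: "p \<in> conf k l" "X = cls k l p"
        unfolding moduli_eq_image_cls by auto
      then have "cmod (p 1 - p (Suc k)) = x"
        using X theta_cls by auto
      then obtain q where "q \<in> C" "(p, q) \<in> congr_rel k l"
        using assms(4) p(1) by blast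
      then show "X \<in> cls k l ` C"
        using p(2) cls_eq by blast
    qed
    show "cls k l ` C \<subseteq> {X \<in> moduli k l. theta k X = x}"
      using assms(3) theta_cls unfolding moduli_eq_image_cls by auto
  qed
  have "connectedin (moduli_top k l) (cls k l ` C)"
    by (rule connectedin_continuous_map_image[OF continuous_map_cls assms(2)])
  moreover have "x \<in> reach k l"
    using assms(1) fiber unfolding reach_def by force
  ultimately show ?thesis
    unfolding nabla_def by (simp add: fiber)
qed

lemma chain_dist_le:
  fixes p :: "nat \<Rightarrow> 'a::real_normed_vector"
  assumes "m \<le> n" and "\<And>i. m \<le> i \<Longrightarrow> i < n \<Longrightarrow> norm (p i - p (Suc i)) = l i"
  shows "norm (p m - p n) \<le> sum l {m..<n}"
  using assms
proof (induction n)
  case 0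
  then show ?case by simp
next
  case (Suc n)
  show ?case
  proof (cases "m = Suc n")
    case False
    then have "m \<le> n"
      using Suc.prems(1) by simp
    have "norm (p m - p (Suc n)) \<le> norm (p m - p n) + norm (p n - p (Suc n))"
      using norm_triangle_ineq[of "p m - p n" "p n - p (Suc n)"] by simp
    also have "\<dots> \<le> sum l {m..<n} + l n"
      using Suc \<open>m \<le> n\<close> by simp
    finally show ?thesis
      using \<open>m \<le> n\<close> by simp
  qed simp
qed

text \<open>For a triangle with base [0, c] on the real axis and sides R1 (at 0) and R2 (at c), the
  apex has real part foot R1 R2 c; the two mirror images of the apex are distinguished by a sign
  e.\<close>
definition foot :: "real \<Rightarrow> real \<Rightarrow> real \<Rightarrow> real" where
  "foot R1 R2 c = (R1\<^sup>2 + c\<^sup>2 - R2\<^sup>2) / (2 * c)"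

definition apex :: "real \<Rightarrow> real \<Rightarrow> real \<Rightarrow> real \<Rightarrow> complex" where
  "apex R1 R2 c e = Complex (foot R1 R2 c) (e * sqrt (R1\<^sup>2 - (foot R1 R2 c)\<^sup>2))"

text \<open>Under the triangle inequalities the foot lies within distance R1 of 0, so the height of
  the triangle is real.\<close>
lemma foot_sq_le:
  assumes "c > 0" "R2 \<le> R1 + c" "R1 \<le> R2 + c" "c \<le> R1 + R2"
  shows "(foot R1 R2 c)\<^sup>2 \<le> R1\<^sup>2"
proof -
  have "R1 \<ge> 0" "R2 \<ge> 0"
    using assms by linarith+
  then have "(R1 - c)\<^sup>2 \<le> R2\<^sup>2" "R2\<^sup>2 \<le> (R1 + c)\<^sup>2"
    using assms by (auto simp: power2_le_iff_abs_le power_mono)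
  then have "R1\<^sup>2 + c\<^sup>2 - R2\<^sup>2 \<le> R1 * (2 * c)" "R2\<^sup>2 - (R1\<^sup>2 + c\<^sup>2) \<le> R1 * (2 * c)"
    by (simp_all add: power2_diff power2_sum)
  then have "\<bar>foot R1 R2 c\<bar> \<le> R1"
    using assms(1) by (simp add: foot_def abs_divide divide_le_eq abs_le_iff)
  then show ?thesis
    using \<open>R1 \<ge> 0\<close> by (simp add: power2_le_iff_abs_le)
qed

lemma apex_dist:
  assumes "c > 0" "R2 \<le> R1 + c" "R1 \<le> R2 + c" "c \<le> R1 + R2" "e \<in> {-1, 1}"
  shows "cmod (apex R1 R2 c e) = R1" "cmod (apex R1 R2 c e - of_real c) = R2"
proof -
  define h where "h = foot R1 R2 c"
  have "R1 \<ge> 0" "R2 \<ge> 0"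
    using assms by linarith+
  have height: "(e * sqrt (R1\<^sup>2 - h\<^sup>2))\<^sup>2 = R1\<^sup>2 - h\<^sup>2"
    using foot_sq_le[OF assms(1-4)] assms(5) unfolding h_def by (auto simp: power_mult_distrib)
  have apex: "apex R1 R2 c e = Complex h (e * sqrt (R1\<^sup>2 - h\<^sup>2))"
    unfolding apex_def h_def ..
  show "cmod (apex R1 R2 c e) = R1"
    unfolding apex cmod_def using height \<open>R1 \<ge> 0\<close> by simp
  have "2 * c * h = R1\<^sup>2 + c\<^sup>2 - R2\<^sup>2"
    unfolding h_def foot_def using assms(1) by simp
  then have "(h - c)\<^sup>2 + (R1\<^sup>2 - h\<^sup>2) = R2\<^sup>2"
    by (simp add: power2_eq_square algebra_simps)
  then show "cmod (apex R1 R2 c e - of_real c) = R2"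
    unfolding apex cmod_def using height \<open>R2 \<ge> 0\<close> by (simp add: Complex_eq)
qed

lemma apex_unique_axis:
  assumes "c > 0" "cmod z = R1" "cmod (z - of_real c) = R2"
  shows "\<exists>e\<in>{-1, 1}. z = apex R1 R2 c e"
proof -
  define h where "h = foot R1 R2 c"
  have R1: "R1\<^sup>2 = (Re z)\<^sup>2 + (Im z)\<^sup>2"
    using assms(2) cmod_power2[of z] by simp
  have R2: "R2\<^sup>2 = (Re z - c)\<^sup>2 + (Im z)\<^sup>2"
    using assms(3) cmod_power2[of "z - of_real c"] by simp
  have "2 * c * Re z = R1\<^sup>2 + c\<^sup>2 - R2\<^sup>2"
    using R1 R2 by (simp add: power2_eq_square algebra_simps)
  then have re: "Re z = h"
    unfolding h_def foot_def using assms(1) by (simp add: field_simps)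
  then have "(Im z)\<^sup>2 = R1\<^sup>2 - h\<^sup>2"
    using R1 by simp
  then have "sqrt (R1\<^sup>2 - h\<^sup>2) = \<bar>Im z\<bar>"
    by (metis real_sqrt_abs)
  then have "Im z = 1 * sqrt (R1\<^sup>2 - h\<^sup>2) \<or> Im z = -1 * sqrt (R1\<^sup>2 - h\<^sup>2)"
    by auto
  then show ?thesis
    using re unfolding apex_def h_def by (auto simp: complex_eq_iff)
qed

lemma apex_unique:
  assumes "c \<noteq> 0" "cmod z = R1" "cmod (z - c) = R2"
  shows "\<exists>e\<in>{-1, 1}. z = (c / of_real (cmod c)) * apex R1 R2 (cmod c) e"
proof -
  define v where "v = cnj c / of_real (cmod c)"
  have norm_sq: "cnj c * c = of_real (cmod c) * of_real (cmod c)"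
    using complex_norm_square[of c] by (simp add: power2_eq_square mult.commute)
  have v_unit: "cmod v = 1"
    unfolding v_def using assms(1) by (simp add: norm_divide)
  have v_c: "v * c = of_real (cmod c)"
    unfolding v_def using assms(1) norm_sq by (simp add: divide_simps)
  have inv: "(c / of_real (cmod c)) * v = 1"
    unfolding v_def using assms(1) norm_sq by (simp add: divide_simps mult.commute)
  have "cmod (v * z) = R1"
    using assms(2) v_unit by (simp add: norm_mult)
  moreover have "cmod (v * z - of_real (cmod c)) = R2"
    using assms(3) v_unit v_c by (simp add: norm_mult flip: v_c right_diff_distrib)
  ultimately obtain e where "e \<in> {-1, 1}" "v * z = apex R1 R2 (cmod c) e"
    using apex_unique_axis[of "cmod c" "v * z" R1 R2] assms(1) by auto
  moreover have "z = (c / of_real (cmod c)) * (v * z)"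
    using inv by (simp add: mult.assoc[symmetric])
  ultimately show ?thesis by auto
qed

lemma apex_degenerate:
  assumes "c \<noteq> 0" "c = R1 + R2 \<or> c = R1 - R2"
  shows "apex R1 R2 c e = apex R1 R2 c 1"
proof -
  have "R1\<^sup>2 + c\<^sup>2 - R2\<^sup>2 = 2 * c * R1"
    using assms(2) by (auto simp: power2_eq_square algebra_simps)
  then have "foot R1 R2 c = R1"
    unfolding foot_def using assms(1) by simp
  then show ?thesis
    unfolding apex_def by simp
qed

lemma continuous_on_apex:
  assumes "continuous_on S f" "continuous_on S g" "\<forall>z\<in>S. g z \<noteq> 0"
  shows "continuous_on S (\<lambda>z. apex (f z) R2 (g z) e)"
  unfolding apex_def foot_def Complex_eq using assms by (intro continuous_intros) auto

lemma conf_edge: "p \<in> conf k l \<Longrightarrow> 1 \<le> i \<Longrightarrow> i \<le> k \<Longrightarrow> cmod (p i - p (Suc i)) = l i"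
  unfolding conf_def by auto

lemma dist_ends_bounds:
  assumes "p \<in> conf k l" "1 \<le> k"
  shows "l 1 - sum l {2..k} \<le> cmod (p 1 - p (Suc k))" "cmod (p 1 - p (Suc k)) \<le> sum l {1..k}"
proof -
  have chain: "cmod (p m - p (Suc k)) \<le> sum l {m..k}" if "1 \<le> m" "m \<le> Suc k" for m
    using chain_dist_le[of m "Suc k" p l] that conf_edge[OF assms(1)]
    by (simp add: atLeastLessThanSuc_atLeastAtMost)
  show "cmod (p 1 - p (Suc k)) \<le> sum l {1..k}"
    using chain[of 1] by simp
  have "l 1 = cmod (p 1 - p 2)"
    using conf_edge[OF assms(1), of 1] assms(2) by (simp add: numeral_2_eq_2)
  also have "\<dots> \<le> cmod (p 1 - p (Suc k)) + cmod (p 2 - p (Suc k))"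
    using norm_triangle_sub[of "p 1 - p 2" "p 1 - p (Suc k)"] by (simp add: norm_minus_commute)
  also have "\<dots> \<le> cmod (p 1 - p (Suc k)) + sum l {2..k}"
    using chain[of 2] assms(2) by simp
  finally show "l 1 - sum l {2..k} \<le> cmod (p 1 - p (Suc k))"
    by simp
qed

lemma reach_four_edges_subset:
  assumes "l 1 = L" "l 2 = s" "l 3 = s" "l 4 = s"
  shows "reach 4 l \<subseteq> {L - 3 * s..L + 3 * s}"
proof -
  have "sum l {2..4} = l 2 + l 3 + l 4" "sum l {1..4} = l 1 + l 2 + l 3 + l 4"
    by (simp_all add: numeral_eq_Suc)
  then have "l 1 - sum l {2..4} = L - 3 * s" "sum l {1..4} = L + 3 * s"
    using assms by simp_all
  then show ?thesis
    using dist_ends_bounds[of _ 4 l] unfolding reach_eq by fastforce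
qed

lemma conf4_iff:
  "p \<in> conf 4 l \<longleftrightarrow> p \<in> extensional {1..5} \<and> cmod (p 1 - p 2) = l 1 \<and>
     cmod (p 2 - p 3) = l 2 \<and> cmod (p 3 - p 4) = l 3 \<and> cmod (p 4 - p 5) = l 4"
proof -
  have "topspace (cspace_top 4) = extensional {1..5}"
    by (simp add: topspace_cspace_top)
  moreover have "{1..4::nat} = {1, 2, 3, 4}"
    by auto
  ultimately show ?thesis
    unfolding conf_def by (auto simp: numeral_eq_Suc)
qed

text \<open>Admissible values (r, q) of the diagonals r = |p(3) - p(1)| and q = |p(4) - p(1)| for
  edge lengths L, s, s, s and terminal distance x, given by the triangle inequalities for the
  triangles (p1,p2,p3), (p1,p3,p4) and (p1,p4,p5) that are not already implied by L \<ge> 3s.\<close>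
definition diagonals :: "real \<Rightarrow> real \<Rightarrow> real \<Rightarrow> (real \<times> real) set" where
  "diagonals L s x =
     {(r, q). L - s \<le> r \<and> r \<le> L + s \<and> r - s \<le> q \<and> q \<le> r + s \<and> \<bar>x - s\<bar> \<le> q \<and> q \<le> x + s}"

text \<open>The configuration in normal position (p(1) = 0 and p(4) = q on the positive real axis)
  determined by the diagonals z = (r, q) and the orientations e1, e2, e3 of the three
  triangles.\<close>
definition normal_conf ::
    "real \<Rightarrow> real \<Rightarrow> real \<Rightarrow> real \<Rightarrow> real \<Rightarrow> real \<Rightarrow> real \<times> real \<Rightarrow> nat \<Rightarrow> complex" where
  "normal_conf L s x e1 e2 e3 z i =
     (if i = 1 then 0
      else if i = 2 then (apex (fst z) s (snd z) e2 / of_real (fst z)) * apex L s (fst z) e1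
      else if i = 3 then apex (fst z) s (snd z) e2
      else if i = 4 then of_real (snd z)
      else if i = 5 then apex x s (snd z) e3
      else undefined)"

lemma convex_diagonals: "convex (diagonals L s x)"
proof -
  have "diagonals L s x =
      {z. (-1, 0) \<bullet> z \<le> s - L} \<inter> {z. (1, 0) \<bullet> z \<le> L + s} \<inter> {z. (1, -1) \<bullet> z \<le> s} \<inter>
      {z. (-1, 1) \<bullet> z \<le> s} \<inter> {z. (0, -1) \<bullet> z \<le> - \<bar>x - s\<bar>} \<inter> {z. (0, 1) \<bullet> z \<le> x + s}"
    unfolding diagonals_def by (auto simp: inner_Pair)
  then show ?thesis
    by (simp add: convex_Int convex_halfspace_le)
qed

definition normal_fiber :: "real \<Rightarrow> real \<Rightarrow> real \<Rightarrow> (nat \<Rightarrow> complex) set" where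
  "normal_fiber L s x =
     (\<Union>e1\<in>{-1, 1}. \<Union>e2\<in>{-1, 1}. \<Union>e3\<in>{-1, 1}. normal_conf L s x e1 e2 e3 ` diagonals L s x)"

context
  fixes L s x :: real and l :: "nat \<Rightarrow> real"
  assumes s_nonneg: "s \<ge> 0" and L_long: "3 * s \<le> L" and L_pos: "L > 0"
    and x_lower: "L - 3 * s \<le> x" and x_upper: "x \<le> L + 3 * s"
    and lengths: "l 1 = L" "l 2 = s" "l 3 = s" "l 4 = s"
begin

lemma diagonals_pos: "z \<in> diagonals L s x \<Longrightarrow> fst z > 0 \<and> snd z > 0"
  unfolding diagonals_def using s_nonneg L_long L_pos by auto

lemma normal_conf_in_conf:
  assumes z: "z \<in> diagonals L s x" and signs: "e1 \<in> {-1, 1}" "e2 \<in> {-1, 1}" "e3 \<in> {-1, 1}"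
  shows "normal_conf L s x e1 e2 e3 z \<in> conf 4 l"
    and "cmod (normal_conf L s x e1 e2 e3 z 1 - normal_conf L s x e1 e2 e3 z 5) = x"
proof -
  obtain r q where rq: "z = (r, q)" by force
  have D: "L - s \<le> r" "r \<le> L + s" "r - s \<le> q" "q \<le> r + s" "\<bar>x - s\<bar> \<le> q" "q \<le> x + s"
    using z unfolding rq diagonals_def by auto
  have pos: "r > 0" "q > 0"
    using diagonals_pos[OF z] rq by auto
  have short_side: "s \<le> r + q"
    using D L_long s_nonneg pos by linarith
  define G where "G = normal_conf L s x e1 e2 e3 z"
  have apex5: "cmod (apex x s q e3) = x" "cmod (apex x s q e3 - of_real q) = s"
    using apex_dist[of q s x e3] D pos signs by auto
  have apex3: "cmod (apex r s q e2) = r" "cmod (apex r s q e2 - of_real q) = s"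
    using apex_dist[of q s r e2] D pos signs short_side by auto
  have apex2: "cmod (apex L s r e1) = L" "cmod (apex L s r e1 - of_real r) = s"
    using apex_dist[of r s L e1] D pos signs L_long s_nonneg by auto
  define w where "w = apex r s q e2 / of_real r"
  have w_unit: "cmod w = 1"
    unfolding w_def using apex3 pos by (simp add: norm_divide)
  have G2: "G 2 = w * apex L s r e1" and G3: "G 3 = w * of_real r"
    unfolding G_def normal_conf_def rq w_def using pos by simp_all
  have "G 2 - G 3 = w * (apex L s r e1 - of_real r)"
    unfolding G2 G3 by (simp add: algebra_simps)
  then have "cmod (G 1 - G 2) = L \<and> cmod (G 2 - G 3) = s \<and> cmod (G 3 - G 4) = s \<and> cmod (G 4 - G 5) = s"
    using G2 apex2 apex3 apex5 w_unit
    by (simp add: G_def normal_conf_def rq norm_mult norm_minus_commute)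
  moreover have "G \<in> extensional {1..5}"
    unfolding G_def normal_conf_def extensional_def by auto
  ultimately show "G \<in> conf 4 l"
    unfolding conf4_iff using lengths by simp
  show "cmod (G 1 - G 5) = x"
    using apex5 unfolding G_def normal_conf_def rq by simp
qed

lemma continuous_normal_conf:
  assumes signs: "e1 \<in> {-1, 1}" "e2 \<in> {-1, 1}" "e3 \<in> {-1, 1}"
  shows "continuous_map (top_of_set (diagonals L s x)) (subtopology (cspace_top 4) (conf 4 l))
           (normal_conf L s x e1 e2 e3)"
proof -
  let ?D = "diagonals L s x"
  have nonzero: "\<forall>z\<in>?D. fst z \<noteq> 0" "\<forall>z\<in>?D. snd z \<noteq> 0"
    using diagonals_pos by force+
  have "continuous_on ?D (\<lambda>z. apex (fst z) s (snd z) e2)"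
    "continuous_on ?D (\<lambda>z. apex x s (snd z) e3)"
    "continuous_on ?D (\<lambda>z. apex L s (fst z) e1)"
    using nonzero by (auto intro!: continuous_on_apex continuous_intros)
  then have "continuous_on ?D (\<lambda>z. normal_conf L s x e1 e2 e3 z i)" for i
    unfolding normal_conf_def using nonzero
    by (cases "i = 1"; cases "i = 2"; cases "i = 3"; cases "i = 4"; cases "i = 5")
      (simp_all add: continuous_intros)
  moreover have "normal_conf L s x e1 e2 e3 z \<in> extensional {1..Suc 4}" for z
    unfolding normal_conf_def extensional_def by auto
  ultimately have "continuous_map (top_of_set ?D) (cspace_top 4) (normal_conf L s x e1 e2 e3)"
    unfolding cspace_top_def continuous_map_componentwise by auto
  then show ?thesis
    using normal_conf_in_conf(1)[OF _ signs] by (simp add: continuous_map_in_subtopology)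
qed

lemma diagonals_of_conf:
  assumes p: "p \<in> conf 4 l" and px: "cmod (p 1 - p 5) = x"
  shows "(dist (p 1) (p 3), dist (p 1) (p 4)) \<in> diagonals L s x"
proof -
  have E: "dist (p 1) (p 2) = L" "dist (p 2) (p 3) = s" "dist (p 3) (p 4) = s"
    "dist (p 4) (p 5) = s" "dist (p 1) (p 5) = x"
    using p px lengths unfolding conf4_iff by (simp_all add: dist_norm)
  then have E_sym: "dist (p 3) (p 2) = s" "dist (p 4) (p 3) = s" "dist (p 5) (p 4) = s"
    by (simp_all add: dist_commute)
  define r where "r = dist (p 1) (p 3)"
  define q where "q = dist (p 1) (p 4)"
  have "r \<le> L + s" "L \<le> r + s" "q \<le> r + s" "r \<le> q + s" "q \<le> x + s" "x \<le> q + s" "s \<le> q + x"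
    using dist_triangle[of "p 1" "p 3" "p 2"] dist_triangle[of "p 1" "p 2" "p 3"]
      dist_triangle[of "p 1" "p 4" "p 3"] dist_triangle[of "p 1" "p 3" "p 4"]
      dist_triangle[of "p 1" "p 4" "p 5"] dist_triangle[of "p 1" "p 5" "p 4"]
      dist_triangle[of "p 4" "p 5" "p 1"] dist_commute[of "p 4" "p 1"] E E_sym
    unfolding r_def q_def by linarith+
  then show ?thesis
    unfolding r_def[symmetric] q_def[symmetric] diagonals_def by auto
qed

text \<open>Every configuration with terminal distance x is congruent to a normal one: rotate
  p(4) - p(1) onto the positive real axis and read off the three triangles with their apexes.\<close>
lemma normal_conf_onto:
  assumes p: "p \<in> conf 4 l" and px: "cmod (p 1 - p 5) = x"
  shows "\<exists>e1\<in>{-1, 1}. \<exists>e2\<in>{-1, 1}. \<exists>e3\<in>{-1, 1}. \<exists>z\<in>diagonals L s x.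
           (p, normal_conf L s x e1 e2 e3 z) \<in> congr_rel 4 l"
proof -
  have E: "cmod (p 2 - p 1) = L" "cmod (p 2 - p 3) = s" "cmod (p 3 - p 4) = s" "cmod (p 5 - p 4) = s"
    using p lengths unfolding conf4_iff by (simp_all add: norm_minus_commute)
  define r where "r = dist (p 1) (p 3)"
  define q where "q = dist (p 1) (p 4)"
  define z where "z = (r, q)"
  have z: "z \<in> diagonals L s x"
    unfolding z_def r_def q_def using diagonals_of_conf[OF p px] .
  then have pos: "r > 0" "q > 0"
    using diagonals_pos unfolding z_def by auto
  define w where "w = p 4 - p 1"
  have w: "w \<noteq> 0" "cmod w = q"
    using pos unfolding w_def q_def by (auto simp: dist_norm norm_minus_commute)
  define \<rho> where "\<rho> = w / of_real q"
  have \<rho>: "cmod \<rho> = 1" "\<rho> * of_real q = w"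
    unfolding \<rho>_def using w pos by (simp_all add: norm_divide)
  have r: "p 3 - p 1 \<noteq> 0" "cmod (p 3 - p 1) = r"
    using pos unfolding r_def by (auto simp: dist_norm norm_minus_commute)
  obtain e2 where e2: "e2 \<in> {-1, 1}" "p 3 - p 1 = \<rho> * apex r s q e2"
    using apex_unique[OF w(1), of "p 3 - p 1" r s] E r unfolding \<rho>_def w
    by (auto simp: w_def)
  obtain e3 where e3: "e3 \<in> {-1, 1}" "p 5 - p 1 = \<rho> * apex x s q e3"
    using apex_unique[OF w(1), of "p 5 - p 1" x s] E px unfolding \<rho>_def w
    by (auto simp: w_def norm_minus_commute)
  obtain e1 where e1: "e1 \<in> {-1, 1}" "p 2 - p 1 = ((p 3 - p 1) / of_real r) * apex L s r e1"
    using apex_unique[OF r(1), of "p 2 - p 1" L s] E r by auto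
  define G where "G = normal_conf L s x e1 e2 e3 z"
  have G: "G 1 = 0" "G 2 = (apex r s q e2 / of_real r) * apex L s r e1" "G 3 = apex r s q e2"
    "G 4 = of_real q" "G 5 = apex x s q e3"
    unfolding G_def normal_conf_def z_def by simp_all
  have "p 2 - p 1 = \<rho> * G 2" "p 3 - p 1 = \<rho> * G 3" "p 4 - p 1 = \<rho> * G 4" "p 5 - p 1 = \<rho> * G 5"
    using e1(2) e2(2) e3(2) \<rho>(2) unfolding G w_def by simp_all
  then have "p i = \<rho> * G i + p 1" if "i \<in> {1..Suc 4}" for i
    using that G(1) by (auto simp: diff_eq_eq numeral_eq_Suc le_Suc_eq)
  then have "(G, p) \<in> congr_rel 4 l"
    using congrI[OF normal_conf_in_conf(1)[OF z e1(1) e2(1) e3(1)] p \<rho>(1)] unfolding G_def by blast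
  then have "(p, G) \<in> congr_rel 4 l"
    using equiv_congr unfolding equiv_def sym_def by blast
  then show ?thesis
    using e1(1) e2(1) e3(1) z unfolding G_def by blast
qed

lemma normal_conf_flat_12:
  assumes "z \<in> diagonals L s x"
    and "fst z = L + s \<or> fst z = L - s" "snd z = fst z + s \<or> snd z = fst z - s"
  shows "normal_conf L s x e1 e2 e3 z = normal_conf L s x 1 1 e3 z"
proof -
  have "fst z \<noteq> 0" "snd z \<noteq> 0"
    using diagonals_pos[OF assms(1)] by auto
  then have "apex L s (fst z) e1 = apex L s (fst z) 1"
    and "apex (fst z) s (snd z) e2 = apex (fst z) s (snd z) 1"
    using assms(2,3) by (auto intro: apex_degenerate)
  then show ?thesis
    unfolding normal_conf_def by (simp only:)
qed

lemma normal_conf_flat_13: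
  assumes "z \<in> diagonals L s x"
    and "fst z = L + s \<or> fst z = L - s" "snd z = x + s \<or> snd z = x - s"
  shows "normal_conf L s x e1 e2 e3 z = normal_conf L s x 1 e2 1 z"
proof -
  have "fst z \<noteq> 0" "snd z \<noteq> 0"
    using diagonals_pos[OF assms(1)] by auto
  then have "apex L s (fst z) e1 = apex L s (fst z) 1"
    and "apex x s (snd z) e3 = apex x s (snd z) 1"
    using assms(2,3) by (auto intro: apex_degenerate)
  then show ?thesis
    unfolding normal_conf_def by (simp only:)
qed

text \<open>Admissible diagonals making the respective pairs of triangles flat exist (this uses
  L \<ge> 3s); they are the gluing points between the orientation pieces.\<close>
lemma flat_diagonals_exist:
  obtains z z' where "z \<in> diagonals L s x"
      "fst z = L + s \<or> fst z = L - s" "snd z = fst z + s \<or> snd z = fst z - s"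
    and "z' \<in> diagonals L s x" "fst z' = L + s \<or> fst z' = L - s" "snd z' = x + s \<or> snd z' = x - s"
proof (cases "x < L - s")
  case True
  show ?thesis
    by (rule that[of "(L - s, L - 2 * s)" "(L - s, x + s)"])
      (use True s_nonneg L_long x_lower in \<open>auto simp: diagonals_def\<close>)
next
  case False
  show ?thesis
  proof (cases "x \<le> L + s")
    case True
    show ?thesis
      by (rule that[of "(L - s, L)" "(L + s, x + s)"])
        (use True False s_nonneg L_long in \<open>auto simp: diagonals_def\<close>)
  next
    case False
    show ?thesis
      by (rule that[of "(L + s, L + 2 * s)" "(L + s, x - s)"])
        (use False \<open>\<not> x < L - s\<close> s_nonneg L_long x_upper in \<open>auto simp: diagonals_def\<close>)
  qed
qed

text \<open>The eight pieces (one for each choice of orientations) are connected and glued along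
  flat configurations, so their union is connected.\<close>
lemma connectedin_normal_fiber:
  "connectedin (subtopology (cspace_top 4) (conf 4 l)) (normal_fiber L s x)"
proof -
  let ?X = "subtopology (cspace_top 4) (conf 4 l)"
  let ?piece = "\<lambda>e1 e2 e3. normal_conf L s x e1 e2 e3 ` diagonals L s x"
  obtain z z' where flat:
    "z \<in> diagonals L s x" "fst z = L + s \<or> fst z = L - s" "snd z = fst z + s \<or> snd z = fst z - s"
    "z' \<in> diagonals L s x" "fst z' = L + s \<or> fst z' = L - s" "snd z' = x + s \<or> snd z' = x - s"
    using flat_diagonals_exist by blast
  have piece: "connectedin ?X (?piece e1 e2 e3)"
    if "e1 \<in> {-1, 1}" "e2 \<in> {-1, 1}" "e3 \<in> {-1, 1}" for e1 e2 e3
    by (rule connectedin_continuous_map_image[OF continuous_normal_conf[OF that]])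
      (simp add: connectedin_subtopology convex_connected convex_diagonals)
  define U where "U e3 = {?piece e1 e2 e3 | e1 e2. e1 \<in> {-1, 1} \<and> e2 \<in> {-1, 1}}" for e3 :: real
  have U_connected: "connectedin ?X (\<Union>(U e3))" if "e3 \<in> {-1, 1}" for e3
  proof (rule connectedin_Union)
    show "connectedin ?X S" if "S \<in> U e3" for S
      using that piece \<open>e3 \<in> {-1, 1}\<close> unfolding U_def by blast
    have "normal_conf L s x 1 1 e3 z \<in> ?piece e1 e2 e3" for e1 e2
      using image_eqI[where f = "normal_conf L s x e1 e2 e3",
          OF normal_conf_flat_12[OF flat(1-3), of e1 e2 e3, symmetric] flat(1)] .
    then show "\<Inter>(U e3) \<noteq> {}"
      unfolding U_def by blast
  qed
  have "normal_conf L s x 1 1 1 z' \<in> ?piece 1 1 1"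
    using flat(4) by blast
  moreover have "normal_conf L s x 1 1 1 z' \<in> ?piece 1 1 (-1)"
    using image_eqI[where f = "normal_conf L s x 1 1 (-1)",
        OF normal_conf_flat_13[OF flat(4-6), of 1 1 "-1", symmetric] flat(4)] .
  ultimately have "\<Union>(U 1) \<inter> \<Union>(U (-1)) \<noteq> {}"
    unfolding U_def by blast
  then have "connectedin ?X (\<Union>(U 1) \<union> \<Union>(U (-1)))"
    using U_connected by (intro connectedin_Un) auto
  moreover have "normal_fiber L s x = \<Union>(U 1) \<union> \<Union>(U (-1))"
    unfolding normal_fiber_def U_def by blast
  ultimately show ?thesis
    by simp
qed

lemma mem_nabla_four_bar: "x \<in> nabla 4 l"
proof (rule mem_nabla_if_transversal)
  obtain z where "z \<in> diagonals L s x"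
    using flat_diagonals_exist by blast
  then have "normal_conf L s x 1 1 1 z \<in> normal_fiber L s x"
    unfolding normal_fiber_def by blast
  then show "normal_fiber L s x \<noteq> {}"
    by blast
  show "connectedin (subtopology (cspace_top 4) (conf 4 l)) (normal_fiber L s x)"
    by (rule connectedin_normal_fiber)
  show "normal_fiber L s x \<subseteq> {p \<in> conf 4 l. cmod (p 1 - p (Suc 4)) = x}"
    using normal_conf_in_conf unfolding normal_fiber_def by (auto simp del: One_nat_def)
  show "\<exists>q\<in>normal_fiber L s x. (p, q) \<in> congr_rel 4 l"
    if p: "p \<in> conf 4 l" and px: "cmod (p 1 - p (Suc 4)) = x" for p
  proof -
    have "cmod (p 1 - p 5) = x"
      using px by simp
    then obtain e1 e2 e3 z where "e1 \<in> {-1, 1}" "e2 \<in> {-1, 1}" "e3 \<in> {-1, 1}" "z \<in> diagonals L s x"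
        "(p, normal_conf L s x e1 e2 e3 z) \<in> congr_rel 4 l"
      using normal_conf_onto[OF p] by blast
    then show ?thesis
      unfolding normal_fiber_def by blast
  qed
qed

end

text \<open>If all edges have length 0, every configuration is constant, so all are congruent and
  the fibre over 0 is a point.\<close>
lemma zero_mem_nabla_of_zero_lengths:
  assumes zero: "\<And>i. i \<in> {1..k} \<Longrightarrow> l i = 0"
  shows "0 \<in> nabla k l"
proof (rule mem_nabla_if_transversal)
  define p0 :: "nat \<Rightarrow> complex" where "p0 = (\<lambda>i. if i \<in> {1..Suc k} then 0 else undefined)"
  have p0: "p0 \<in> conf k l"
    unfolding conf_def topspace_cspace_top p0_def extensional_def using zero by auto
  show "{p0} \<noteq> {}"
    by simp
  show "connectedin (subtopology (cspace_top k) (conf k l)) {p0}"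
    using p0 conf_subset_topspace by auto
  show "{p0} \<subseteq> {p \<in> conf k l. cmod (p 1 - p (Suc k)) = 0}"
    using p0 unfolding p0_def by simp
  show "\<exists>q\<in>{p0}. (p, q) \<in> congr_rel k l" if p: "p \<in> conf k l" for p
  proof -
    have chain: "cmod (p 1 - p i) \<le> sum l {1..<i}" if "i \<in> {1..Suc k}" for i
      by (rule chain_dist_le) (use that conf_edge[OF p] in auto)
    have zero_sum: "sum l {1..<i} = 0" if "i \<in> {1..Suc k}" for i
      by (rule sum.neutral) (use that zero in auto)
    have "(p, p0) \<in> congr_rel k l"
    proof (rule congrI[OF p p0, where u = 1 and c = "- p 1"])
      fix i assume i: "i \<in> {1..Suc k}"
      then have "p i = p 1"
        using chain[OF i] zero_sum[OF i] by simp
      then show "p0 i = 1 * p i + - p 1"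
        using i by (simp add: p0_def)
    qed simp
    then show ?thesis
      by blast
  qed
qed

theorem mainTheorem13:
  fixes a b :: real and l :: "nat \<Rightarrow> real"
  assumes "0 \<le> a" "a \<le> b"
    and "l 1 = (a + b) / 2" "l 2 = (b - a) / 6" "l 3 = (b - a) / 6" "l 4 = (b - a) / 6"
  shows "reach 4 l = {a..b} \<and> nabla 4 l = {a..b}"
proof -
  define L where "L = (a + b) / 2"
  define s where "s = (b - a) / 6"
  have lengths: "l 1 = L" "l 2 = s" "l 3 = s" "l 4 = s"
    using assms(3-6) unfolding L_def s_def by simp_all
  have ends: "L - 3 * s = a" "L + 3 * s = b" and shape: "s \<ge> 0" "3 * s \<le> L"
    using assms(1,2) unfolding L_def s_def by (simp_all add: field_simps)
  have "reach 4 l \<subseteq> {a..b}"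
    using reach_four_edges_subset[OF lengths] unfolding ends .
  moreover have "x \<in> nabla 4 l" if "a \<le> x" "x \<le> b" for x
  proof (cases "b = 0")
    case True
    then have "x = 0" "\<And>i. i \<in> {1..4} \<Longrightarrow> l i = 0"
      using assms that by (auto simp: numeral_eq_Suc le_Suc_eq)
    then show ?thesis
      using zero_mem_nabla_of_zero_lengths by blast
  next
    case False
    then have "L > 0"
      using assms(1,2) unfolding L_def by simp
    then show ?thesis
      using mem_nabla_four_bar[OF shape(1,2) _ _ _ lengths] ends that by simp
  qed
  moreover have "nabla 4 l \<subseteq> reach 4 l"
    unfolding nabla_def by auto
  ultimately show ?thesis
    by auto
qed

end
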